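(* Let $P_3$ be the path on $3$ vertices with endpoints $u,v$, let $q\in\mathbb{R}$, and let \[ H = \begin{bmatrix} 0&1&0\\ 1&q&1\\ 0&1&0\end{bmatrix}, \] i.e. the adjacency matrix plus the potential $\mathrm{diag}(0,q,0)$. Then there is perfect state transfer from $u$ to $v$ (for the Hamiltonian $H$) if and only if there exist integers $k$ and $\ell$ of opposite parity such that \[ (k^2-\ell^2)q^2 = 8\ell^2. \] When this is the case, perfect state transfer occurs at time $t = \frac{2\pi k}{\sqrt{q^2+8}}$.
   Context: With $U(t) = e^{itH}$, perfect state transfer from $u$ to $v$ occurs at time $T$ if $|U(T)_{u,v}|=1$, and "perfect state transfer from $u$ to $v$" means this happens for some $T$. *)

theory Defs
  imports "HOL-Analysis.Analysis" "HOL-Library.Numeral_Type"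
begin

text \<open>Matrix powers of square matrices (vertices of P3 are indexed by the type 3,
  with elements 0 (endpoint u), 1 (middle vertex), 2 (endpoint v)).\<close>

primrec mpow :: "'a::comm_ring_1^'n^'n \<Rightarrow> nat \<Rightarrow> 'a^'n^'n" where
  "mpow M 0 = mat 1"
| "mpow M (Suc n) = M ** mpow M n"

definition transfer_matrix :: "complex^'n^'n \<Rightarrow> real \<Rightarrow> complex^'n^'n" where
  "transfer_matrix H t = (\<chi> a b. \<Sum>n. ((\<i> * of_real t) ^ n / fact n) * (mpow H n $ a $ b))"

definition pst_at :: "complex^'n^'n \<Rightarrow> 'n \<Rightarrow> 'n \<Rightarrow> real \<Rightarrow> bool" where
  "pst_at H u v T \<longleftrightarrow> cmod (transfer_matrix H T $ u $ v) = 1"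

definition pst :: "complex^'n^'n \<Rightarrow> 'n \<Rightarrow> 'n \<Rightarrow> bool" where
  "pst H u v \<longleftrightarrow> (\<exists>T. pst_at H u v T)"

definition H_P3 :: "real \<Rightarrow> complex^3^3" where
  "H_P3 q = (\<chi> i j. if i = j then (if i = 1 then complex_of_real q else 0)
                     else if i = 1 \<or> j = 1 then 1 else 0)"

end

theory Submission
  imports Defs
begin

text \<open>H has eigenvalues \<open>\<theta>\<^sub>\<plusminus> = (q \<plusminus> \<surd>(q\<^sup>2 + 8)) / 2\<close> and 0, the last with
  eigenvector \<open>(1, 0, -1)\<close>. Expanding the end vertex in an eigenbasis gives
  \<open>U(t)\<^sub>u\<^sub>v = a exp(i t \<theta>\<^sub>+) + b exp(i t \<theta>\<^sub>-) - 1/2\<close> with \<open>a, b > 0\<close> and \<open>a + b = 1/2\<close>, so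
  by the equality case of the triangle inequality the amplitude has modulus 1 exactly when
  both exponentials equal \<open>-1\<close>, i.e. \<open>t \<theta>\<^sub>+\<close> and \<open>t \<theta>\<^sub>-\<close> are odd multiples of \<open>\<pi>\<close>.
  Their difference \<open>t \<surd>(q\<^sup>2 + 8)\<close> and sum \<open>t q\<close> are then \<open>2\<pi>k\<close> and \<open>2\<pi>l\<close> with \<open>k + l\<close>
  odd, and eliminating t gives \<open>(k\<^sup>2 - l\<^sup>2) q\<^sup>2 = 8 l\<^sup>2\<close>.\<close>

definition eig_plus :: "real \<Rightarrow> real" where
  "eig_plus q = (q + sqrt (q\<^sup>2 + 8)) / 2"

definition eig_minus :: "real \<Rightarrow> real" where
  "eig_minus q = (q - sqrt (q\<^sup>2 + 8)) / 2"

definition weight_plus :: "real \<Rightarrow> real" where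
  "weight_plus q = - eig_minus q / (2 * sqrt (q\<^sup>2 + 8))"

definition weight_minus :: "real \<Rightarrow> real" where
  "weight_minus q = eig_plus q / (2 * sqrt (q\<^sup>2 + 8))"

definition P3_coeff :: "real \<Rightarrow> nat \<Rightarrow> real" where
  "P3_coeff q n = weight_plus q * eig_plus q ^ n + weight_minus q * eig_minus q ^ n"

lemma sqrt_q2_plus_8_gt_abs: "sqrt (q\<^sup>2 + 8) > \<bar>q\<bar>"
  by (metis real_sqrt_abs real_sqrt_less_mono add_less_cancel_left add_0_right zero_less_numeral)

lemma sqrt_q2_plus_8_pos: "sqrt (q\<^sup>2 + 8) > 0"
  using sqrt_q2_plus_8_gt_abs[of q] by linarith

lemma eig_plus_diff_eig_minus: "eig_plus q - eig_minus q = sqrt (q\<^sup>2 + 8)"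
  by (simp add: eig_plus_def eig_minus_def field_simps)

lemma eig_char_poly:
  assumes "x = eig_plus q \<or> x = eig_minus q"
  shows "x\<^sup>2 = q * x + 2"
proof -
  define s where "s = sqrt (q\<^sup>2 + 8)"
  have "x = (q + s) / 2 \<or> x = (q - s) / 2"
    using assms by (simp add: s_def eig_plus_def eig_minus_def)
  moreover have "s * s = q * q + 8"
    by (simp add: s_def flip: power2_eq_square)
  then have "((q + s) / 2)\<^sup>2 = q * ((q + s) / 2) + 2" "((q - s) / 2)\<^sup>2 = q * ((q - s) / 2) + 2"
    by (simp_all add: power2_eq_square field_simps)
  ultimately show ?thesis
    by metis
qed

lemma weights_pos: "weight_plus q > 0" "weight_minus q > 0"
  and weights_sum: "weight_plus q + weight_minus q = 1/2"
  using sqrt_q2_plus_8_pos[of q] sqrt_q2_plus_8_gt_abs[of q]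
  by (auto simp: weight_plus_def weight_minus_def eig_plus_def eig_minus_def field_simps)

lemma P3_coeff_0: "P3_coeff q 0 = 1/2"
  by (simp add: P3_coeff_def weights_sum)

lemma P3_coeff_1: "P3_coeff q 1 = 0"
  using sqrt_q2_plus_8_pos[of q]
  by (simp add: P3_coeff_def weight_plus_def weight_minus_def field_simps)

lemma P3_coeff_Suc_Suc: "P3_coeff q (Suc (Suc n)) = q * P3_coeff q (Suc n) + 2 * P3_coeff q n"
proof -
  have "x ^ Suc (Suc n) = q * x ^ Suc n + 2 * x ^ n" if "x = eig_plus q \<or> x = eig_minus q" for x
  proof -
    have "x ^ Suc (Suc n) = x ^ n * x\<^sup>2"
      by (simp add: power2_eq_square)
    then show ?thesis
      using eig_char_poly[OF that] by (simp add: algebra_simps)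
  qed
  then show ?thesis by (simp add: P3_coeff_def algebra_simps)
qed

lemma H_P3_entries:
  "H_P3 q $ 0 $ 0 = 0" "H_P3 q $ 0 $ 1 = 1" "H_P3 q $ 0 $ 2 = 0"
  "H_P3 q $ 1 $ 0 = 1" "H_P3 q $ 1 $ 1 = of_real q" "H_P3 q $ 1 $ 2 = 1"
  "H_P3 q $ 2 $ 0 = 0" "H_P3 q $ 2 $ 1 = 1" "H_P3 q $ 2 $ 2 = 0"
  by (simp_all add: H_P3_def)

lemma mpow_H_P3_column_2:
  "mpow (H_P3 q) n $ 0 $ 2 = of_real (P3_coeff q n) - (if n = 0 then 1/2 else 0) \<and>
   mpow (H_P3 q) n $ 1 $ 2 = of_real (P3_coeff q (Suc n)) \<and>
   mpow (H_P3 q) n $ 2 $ 2 = of_real (P3_coeff q n) + (if n = 0 then 1/2 else 0)"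
proof (induction n)
  case 0
  then show ?case
    using P3_coeff_1[of q] by (simp add: P3_coeff_0 mat_def)
next
  case (Suc n)
  let ?M = "mpow (H_P3 q) n"
  have three_eq_zero: "(3::3) = 0"
    by simp
  have column: "mpow (H_P3 q) (Suc n) $ i $ 2 = H_P3 q $ i $ 0 * ?M $ 0 $ 2
      + H_P3 q $ i $ 1 * ?M $ 1 $ 2 + H_P3 q $ i $ 2 * ?M $ 2 $ 2" for i
    by (simp add: matrix_matrix_mult_def sum_3 three_eq_zero algebra_simps)
  show ?case
    using Suc.IH unfolding column H_P3_entries by (simp add: P3_coeff_Suc_Suc algebra_simps)
qed

lemma transfer_matrix_H_P3_0_2:
  "transfer_matrix (H_P3 q) t $ 0 $ 2 =
     of_real (weight_plus q) * exp (\<i> * of_real (t * eig_plus q))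
   + of_real (weight_minus q) * exp (\<i> * of_real (t * eig_minus q)) - 1/2"
proof -
  have term_eq: "(\<i> * of_real t) ^ n / fact n * mpow (H_P3 q) n $ 0 $ 2 =
        of_real (weight_plus q) * ((\<i> * of_real (t * eig_plus q)) ^ n /\<^sub>R fact n)
      + of_real (weight_minus q) * ((\<i> * of_real (t * eig_minus q)) ^ n /\<^sub>R fact n)
      - (if n = 0 then 1/2 else 0)" for n
    using mpow_H_P3_column_2[of q n]
    by (cases "n = 0") (simp_all add: P3_coeff_def scaleR_conv_of_real power_mult_distrib field_simps)
  have "(\<lambda>n. if n = 0 then 1/2 else 0 :: complex) sums (1/2)"
    using sums_single[of 0 "\<lambda>_. 1/2 :: complex"] by simp
  then have "(\<lambda>n. (\<i> * of_real t) ^ n / fact n * mpow (H_P3 q) n $ 0 $ 2) sums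
      (of_real (weight_plus q) * exp (\<i> * of_real (t * eig_plus q))
     + of_real (weight_minus q) * exp (\<i> * of_real (t * eig_minus q)) - 1/2)"
    unfolding term_eq by (intro sums_diff sums_add sums_mult exp_converges)
  then show ?thesis
    by (simp add: transfer_matrix_def sums_iff)
qed

lemma norm_convex_units_eq_imp_eq:
  fixes z w u :: "'a::real_inner"
  assumes "a > 0" "b > 0" "c > 0" "norm z = 1" "norm w = 1" "norm u = 1"
    and "norm (a *\<^sub>R z + b *\<^sub>R w + c *\<^sub>R u) = a + b + c"
  shows "z = u \<and> w = u"
proof -
  have "norm (a *\<^sub>R z + b *\<^sub>R w + c *\<^sub>R u) \<le> norm (a *\<^sub>R z + b *\<^sub>R w) + c"
    using norm_triangle_ineq[of "a *\<^sub>R z + b *\<^sub>R w" "c *\<^sub>R u"] assms by simp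
  moreover have "norm (a *\<^sub>R z + b *\<^sub>R w) \<le> a + b"
    using norm_triangle_ineq[of "a *\<^sub>R z" "b *\<^sub>R w"] assms by simp
  ultimately have ab: "norm (a *\<^sub>R z + b *\<^sub>R w) = a + b"
    and abc: "norm (a *\<^sub>R z + b *\<^sub>R w + c *\<^sub>R u) = norm (a *\<^sub>R z + b *\<^sub>R w) + norm (c *\<^sub>R u)"
    using assms by auto
  from ab have "a *\<^sub>R (b *\<^sub>R w) = b *\<^sub>R (a *\<^sub>R z)"
    using norm_triangle_eq[of "a *\<^sub>R z" "b *\<^sub>R w"] assms by simp
  then have wz: "w = z"
    using assms(1,2) by (simp add: mult.commute)
  have "a *\<^sub>R z + b *\<^sub>R w = (a + b) *\<^sub>R z"
    by (simp add: wz scaleR_add_left)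
  with abc have "norm ((a + b) *\<^sub>R z) *\<^sub>R (c *\<^sub>R u) = norm (c *\<^sub>R u) *\<^sub>R ((a + b) *\<^sub>R z)"
    by (simp only: norm_triangle_eq)
  then have "u = z"
    using assms(1-6) by (simp add: mult.commute)
  with wz show ?thesis by simp
qed

lemma exp_i_real_eq_minus_one_iff:
  "exp (\<i> * of_real x) = -1 \<longleftrightarrow> (\<exists>m::int. odd m \<and> x = of_int m * pi)"
proof -
  have "exp (\<i> * of_real x) = -1 \<longleftrightarrow> exp (\<i> * of_real x) = exp (\<i> * of_real pi)"
    by simp
  also have "\<dots> \<longleftrightarrow> (\<exists>n::int. \<i> * of_real x = \<i> * of_real pi + (of_int (2 * n) * pi) * \<i>)"
    by (rule exp_eq)
  also have "\<dots> \<longleftrightarrow> (\<exists>n::int. x = of_int (2 * n + 1) * pi)"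
    by (simp add: complex_eq_iff algebra_simps)
  also have "\<dots> \<longleftrightarrow> (\<exists>m::int. odd m \<and> x = of_int m * pi)"
  proof
    assume "\<exists>n::int. x = of_int (2 * n + 1) * pi"
    then obtain n :: int where "x = of_int (2 * n + 1) * pi" ..
    moreover have "odd (2 * n + 1)"
      by simp
    ultimately show "\<exists>m::int. odd m \<and> x = of_int m * pi"
      by blast
  next
    assume "\<exists>m::int. odd m \<and> x = of_int m * pi"
    then show "\<exists>n::int. x = of_int (2 * n + 1) * pi"
      by (metis oddE)
  qed
  finally show ?thesis .
qed

lemma pst_at_H_P3_iff_exp:
  "pst_at (H_P3 q) 0 2 t \<longleftrightarrow>
     exp (\<i> * of_real (t * eig_plus q)) = -1 \<and> exp (\<i> * of_real (t * eig_minus q)) = -1"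
  (is "_ \<longleftrightarrow> ?Ep = -1 \<and> ?Em = -1")
proof -
  let ?a = "weight_plus q" and ?b = "weight_minus q"
  have amplitude: "transfer_matrix (H_P3 q) t $ 0 $ 2 = ?a *\<^sub>R ?Ep + ?b *\<^sub>R ?Em + (1/2) *\<^sub>R (-1)"
    by (simp add: transfer_matrix_H_P3_0_2 scaleR_conv_of_real)
  have total: "?a + ?b + 1/2 = 1"
    using weights_sum[of q] by simp
  show ?thesis
  proof
    assume "pst_at (H_P3 q) 0 2 t"
    then have norm_eq: "norm (?a *\<^sub>R ?Ep + ?b *\<^sub>R ?Em + (1/2) *\<^sub>R (-1)) = ?a + ?b + 1/2"
      unfolding pst_at_def amplitude total .
    show "?Ep = -1 \<and> ?Em = -1"
      by (rule norm_convex_units_eq_imp_eq[OF weights_pos(1,2) _ _ _ _ norm_eq])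
        (simp_all add: norm_exp_i_times)
  next
    assume "?Ep = -1 \<and> ?Em = -1"
    then have "transfer_matrix (H_P3 q) t $ 0 $ 2 = (?a + ?b + 1/2) *\<^sub>R (-1)"
      unfolding amplitude by (simp only: scaleR_add_left)
    then show "pst_at (H_P3 q) 0 2 t"
      unfolding pst_at_def total by simp
  qed
qed

lemma pst_at_H_P3_iff:
  "pst_at (H_P3 q) 0 2 t \<longleftrightarrow>
     (\<exists>k l::int. odd (k + l) \<and> t * sqrt (q\<^sup>2 + 8) = 2 * pi * k \<and> t * q = 2 * pi * l)"
proof -
  have "pst_at (H_P3 q) 0 2 t \<longleftrightarrow>
      (\<exists>m::int. odd m \<and> t * eig_plus q = m * pi) \<and> (\<exists>n::int. odd n \<and> t * eig_minus q = n * pi)"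
    by (simp only: pst_at_H_P3_iff_exp exp_i_real_eq_minus_one_iff)
  also have "\<dots> \<longleftrightarrow>
      (\<exists>m n::int. odd m \<and> odd n \<and> t * eig_plus q = m * pi \<and> t * eig_minus q = n * pi)"
    by blast
  also have "\<dots> \<longleftrightarrow>
      (\<exists>k l::int. odd (k + l) \<and> t * sqrt (q\<^sup>2 + 8) = 2 * pi * k \<and> t * q = 2 * pi * l)"
  proof
    assume "\<exists>m n::int. odd m \<and> odd n \<and> t * eig_plus q = m * pi \<and> t * eig_minus q = n * pi"
    then obtain m n :: int where mn: "odd m" "odd n"
      "t * eig_plus q = m * pi" "t * eig_minus q = n * pi" by blast
    define k where "k = (m - n) div 2"
    define l where "l = (m + n) div 2"
    have kl: "m - n = 2 * k" "m + n = 2 * l" "k + l = m"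
      using mn(1,2) unfolding k_def l_def by presburger+
    have "t * sqrt (q\<^sup>2 + 8) = t * eig_plus q - t * eig_minus q"
      unfolding eig_plus_diff_eig_minus[symmetric] by (rule right_diff_distrib)
    also have "\<dots> = of_int (m - n) * pi"
      using mn(3,4) by (simp add: left_diff_distrib)
    finally have "t * sqrt (q\<^sup>2 + 8) = 2 * pi * k"
      unfolding kl(1) by simp
    moreover have "t * q = t * eig_plus q + t * eig_minus q"
      by (simp add: eig_plus_def eig_minus_def field_simps)
    then have "t * q = of_int (m + n) * pi"
      using mn(3,4) by (simp add: distrib_right)
    then have "t * q = 2 * pi * l"
      unfolding kl(2) by simp
    ultimately show "\<exists>k l::int. odd (k + l) \<and> t * sqrt (q\<^sup>2 + 8) = 2 * pi * k \<and> t * q = 2 * pi * l"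
      using mn(1) kl(3) by blast
  next
    assume "\<exists>k l::int. odd (k + l) \<and> t * sqrt (q\<^sup>2 + 8) = 2 * pi * k \<and> t * q = 2 * pi * l"
    then obtain k l :: int where kl: "odd (k + l)"
      "t * sqrt (q\<^sup>2 + 8) = 2 * pi * k" "t * q = 2 * pi * l" by blast
    have "t * eig_plus q = (t * q + t * sqrt (q\<^sup>2 + 8)) / 2"
      "t * eig_minus q = (t * q - t * sqrt (q\<^sup>2 + 8)) / 2"
      by (simp_all add: eig_plus_def eig_minus_def field_simps)
    then have "t * eig_plus q = of_int (l + k) * pi" "t * eig_minus q = of_int (l - k) * pi"
      unfolding kl(2,3) by (simp_all add: algebra_simps)
    moreover have "odd (l + k)" "odd (l - k)"
      using kl(1) by presburger+
    ultimately show "\<exists>m n::int. odd m \<and> odd n \<and> t * eig_plus q = m * pi \<and> t * eig_minus q = n * pi"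
      by blast
  qed
  finally show ?thesis .
qed

lemma pst_condition_iff_squares_eq:
  "(real_of_int k ^ 2 - real_of_int l ^ 2) * q ^ 2 = 8 * real_of_int l ^ 2 \<longleftrightarrow>
     (k * q)\<^sup>2 = (l * sqrt (q\<^sup>2 + 8))\<^sup>2"
  by (simp add: power_mult_distrib algebra_simps)

lemma pst_at_H_P3_imp_pst_condition:
  assumes "pst_at (H_P3 q) 0 2 t"
  shows "\<exists>k l :: int. odd (k + l) \<and> (real_of_int k ^ 2 - real_of_int l ^ 2) * q ^ 2 = 8 * real_of_int l ^ 2"
proof -
  obtain k l :: int where kl: "odd (k + l)"
    "t * sqrt (q\<^sup>2 + 8) = 2 * pi * k" "t * q = 2 * pi * l"
    using assms pst_at_H_P3_iff by blast
  have "(2 * pi)\<^sup>2 * (k * q)\<^sup>2 = (t * sqrt (q\<^sup>2 + 8) * q)\<^sup>2"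
    unfolding kl(2) by (simp add: power_mult_distrib)
  also have "\<dots> = (t * q * sqrt (q\<^sup>2 + 8))\<^sup>2"
    by (simp add: mult_ac)
  also have "\<dots> = (2 * pi)\<^sup>2 * (l * sqrt (q\<^sup>2 + 8))\<^sup>2"
    unfolding kl(3) by (simp add: power_mult_distrib)
  finally have "(k * q)\<^sup>2 = (l * sqrt (q\<^sup>2 + 8))\<^sup>2"
    by simp
  with kl(1) show ?thesis
    unfolding pst_condition_iff_squares_eq by blast
qed

lemma pst_condition_imp_pst_at_H_P3:
  assumes "odd (k + l)" "(real_of_int k ^ 2 - real_of_int l ^ 2) * q ^ 2 = 8 * real_of_int l ^ 2"
  shows "pst_at (H_P3 q) 0 2 (2 * pi * real_of_int k / sqrt (q ^ 2 + 8))"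
proof -
  let ?s = "sqrt (q\<^sup>2 + 8)"
  have "k * q = l * ?s \<or> k * q = of_int (- l) * ?s"
    using assms(2) unfolding pst_condition_iff_squares_eq power2_eq_iff by simp
  moreover have "odd (k + - l)"
    using assms(1) by presburger
  ultimately obtain l' :: int where l': "odd (k + l')" "k * q = l' * ?s"
    using assms(1) by blast
  have "2 * pi * k / ?s * ?s = 2 * pi * k"
    using sqrt_q2_plus_8_pos[of q] by simp
  moreover have "2 * pi * k / ?s * q = 2 * pi * l'"
    using l'(2) sqrt_q2_plus_8_pos[of q] by (simp add: field_simps)
  ultimately show ?thesis
    unfolding pst_at_H_P3_iff using l'(1) by blast
qed

theorem theorem3:
  fixes q :: real
  shows "(pst (H_P3 q) 0 2 \<longleftrightarrow>
           (\<exists>k l :: int. odd (k + l) \<and> (real_of_int k ^ 2 - real_of_int l ^ 2) * q ^ 2 = 8 * real_of_int l ^ 2))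
         \<and> (\<forall>k l :: int. odd (k + l) \<and> (real_of_int k ^ 2 - real_of_int l ^ 2) * q ^ 2 = 8 * real_of_int l ^ 2
              \<longrightarrow> pst_at (H_P3 q) 0 2 (2 * pi * real_of_int k / sqrt (q ^ 2 + 8)))"
  using pst_at_H_P3_imp_pst_condition pst_condition_imp_pst_at_H_P3 unfolding pst_def by blast

end
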